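(* Consider the queueing system in the context under MaxWeight with a diagonal matrix $\Delta$ with positive diagonal entries, in overload ($\rho\notin\mathcal{P}$). Let $H=\limsup_{t\to\infty}\langle \frac{X(t)}{t},\Delta\frac{X(t)}{t}\rangle$ and let $\eta$ be the limit of $X(t_c)/t_c$ along an increasing unbounded sequence $\{t_c\}$ with $\langle\eta,\Delta\eta\rangle=H$. Then for any increasing unbounded sequence $\{t_m\}$ with $\lim_{m\to\infty}X(t_m)/t_m=\mu$, $$\langle\mu,\Delta\eta\rangle\ge\langle\eta,\Delta\eta\rangle\implies \mu=\eta.$$
   Context: Model: $Q$ queues, finite set $\mathcal{S}=\{S_1,\dots,S_N\}\subset\mathbb{R}^Q_{\ge0}$, discrete time. Arrivals $A(t)$ with $0\le A_q(t)\le\bar A_q<\infty$ and $\rho_q=\lim_{t\to\infty}\frac1t\sum_{s=0}^{t-1}A_q(s)\in(0,\infty)$. Departures $D_q(t)=\min\{S_q(t),X_q(t)\}$, $X(t+1)=X(t)+A(t)-D(t)$, $X(0)=0$, with $S(t)\in\arg\max_{S\in\mathcal{S}}\langle S,\Delta X(t)\rangle$. Stability region $\mathcal{P}=\{r\in\mathbb{R}^Q_{\ge0}: r\le\sum_n\alpha_nS_n\text{ for some }\alpha_n\ge0,\sum_n\alpha_n=1\}$. *)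

theory Defs
  imports "HOL-Analysis.Analysis"
begin

definition stab_region :: "(real^'q::finite) set \<Rightarrow> (real^'q) set" where
  "stab_region SS = {r. (\<forall>q. 0 \<le> r$q) \<and>
     (\<exists>\<alpha>. (\<forall>s\<in>SS. 0 \<le> \<alpha> s) \<and> sum \<alpha> SS = 1 \<and>
          (\<forall>q. r$q \<le> (\<Sum>s\<in>SS. \<alpha> s * s$q)))}"

end

theory Submission
  imports Defs
begin

text \<open>Along \<open>tm\<close> the form
  \<open>\<langle>x, \<Delta> x\<rangle>\<close> of \<open>X t / t\<close> tends to \<open>\<langle>\<mu>, \<Delta> \<mu>\<rangle>\<close>, which therefore
  cannot exceed the limsup \<open>\<langle>\<eta>, \<Delta> \<eta>\<rangle>\<close>. Expanding the form at \<open>\<mu> - \<eta>\<close> gives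
  \<open>\<langle>\<mu>-\<eta>, \<Delta>(\<mu>-\<eta>)\<rangle> \<le> 2 \<langle>\<eta>, \<Delta> \<eta>\<rangle> - 2 \<langle>\<mu>, \<Delta> \<eta>\<rangle> \<le> 0\<close>, and a diagonal matrix
  with positive diagonal is positive definite.\<close>

lemma Limsup_ge_limit_along:
  fixes f :: "'a \<Rightarrow> 'b::{complete_linorder,linorder_topology}"
  assumes r: "filterlim r F G" and G: "G \<noteq> bot"
    and lim: "((\<lambda>x. f (r x)) \<longlongrightarrow> L) G"
  shows "L \<le> Limsup F f"
proof -
  have "L = Limsup G (\<lambda>x. f (r x))"
    using lim G by (intro lim_imp_Limsup[symmetric]) auto
  also have "\<dots> \<le> Limsup (filtermap r G) f"
    by (rule Limsup_filtermap_ge)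
  also have "\<dots> \<le> Limsup F f"
    using r unfolding filterlim_def Limsup_def
    by (intro INF_superset_mono) (auto simp: le_filter_def)
  finally show ?thesis .
qed

lemma inner_diagonal_matrix_vector:
  fixes D :: "real^'n^'n"
  assumes diag: "\<forall>i j. i \<noteq> j \<longrightarrow> D$i$j = 0"
  shows "x \<bullet> (D *v y) = (\<Sum>i\<in>UNIV. D$i$i * x$i * y$i)"
proof -
  have "(D *v y)$i = D$i$i * y$i" for i
  proof -
    have "(D *v y)$i = (\<Sum>j\<in>UNIV. D$i$j * y$j)"
      by (simp add: matrix_vector_mult_def)
    also have "\<dots> = D$i$i * y$i"
      by (subst sum.remove[of _ i]) (auto intro!: sum.neutral simp: diag)
    finally show ?thesis .
  qed
  then show ?thesis
    by (simp add: inner_vec_def algebra_simps)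
qed

lemma diagonal_quadratic_form_diff:
  fixes D :: "real^'n^'n"
  assumes diag: "\<forall>i j. i \<noteq> j \<longrightarrow> D$i$j = 0"
  shows "(x - y) \<bullet> (D *v (x - y)) = x \<bullet> (D *v x) - 2 * (x \<bullet> (D *v y)) + y \<bullet> (D *v y)"
  unfolding inner_diagonal_matrix_vector[OF diag]
  by (simp add: algebra_simps sum.distrib sum_subtractf sum_distrib_left)

lemma diagonal_quadratic_form_nonpos_imp_zero:
  fixes D :: "real^'n^'n"
  assumes diag: "\<forall>i j. i \<noteq> j \<longrightarrow> D$i$j = 0" and pos: "\<forall>i. 0 < D$i$i"
    and nonpos: "x \<bullet> (D *v x) \<le> 0"
  shows "x = 0"
proof -
  have terms: "0 \<le> D$i$i * x$i * x$i" for i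
    using pos[rule_format, of i] by (simp add: mult.assoc)
  then have "(\<Sum>i\<in>UNIV. D$i$i * x$i * x$i) = 0"
    using nonpos unfolding inner_diagonal_matrix_vector[OF diag]
    by (meson antisym sum_nonneg)
  then have "D$i$i * x$i * x$i = 0" for i
    using terms by (simp add: sum_nonneg_eq_0_iff)
  then have "x$i = 0" for i
    using pos by (metis less_irrefl mult_eq_0_iff)
  then show ?thesis
    by (simp add: vec_eq_iff)
qed

theorem lemma5:
  fixes SS :: "(real^'q::finite) set"
    and A X S :: "nat \<Rightarrow> real^'q"
    and Abar \<rho> \<eta> \<mu> :: "real^'q"
    and \<Delta> :: "real^'q^'q"
    and tc tm :: "nat \<Rightarrow> nat"
  assumes fin: "finite SS" and ne: "SS \<noteq> {}"
    and nonneg: "\<forall>s\<in>SS. \<forall>q. 0 \<le> s$q"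
    and arr_bd: "\<forall>t q. 0 \<le> A t $ q \<and> A t $ q \<le> Abar $ q"
    and rate: "(\<lambda>t. (\<Sum>s<t. A s) /\<^sub>R real t) \<longlonglongrightarrow> \<rho>"
    and rate_pos: "\<forall>q. 0 < \<rho> $ q"
    and diag: "\<forall>i j. i \<noteq> j \<longrightarrow> \<Delta>$i$j = 0"
    and diag_pos: "\<forall>i. 0 < \<Delta>$i$i"
    and X0: "X 0 = 0"
    and maxweight: "\<forall>t. S t \<in> SS \<and> (\<forall>s\<in>SS. s \<bullet> (\<Delta> *v X t) \<le> S t \<bullet> (\<Delta> *v X t))"
    and dyn: "\<forall>t. X (Suc t) = X t + A t - (\<chi> q. min (S t $ q) (X t $ q))"
    and overload: "\<rho> \<notin> stab_region SS"
    and tc_mono: "mono tc" and tc_unb: "filterlim tc at_top sequentially"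
    and tc_lim: "(\<lambda>c. X (tc c) /\<^sub>R real (tc c)) \<longlonglongrightarrow> \<eta>"
    and H: "limsup (\<lambda>t. ereal ((X t /\<^sub>R real t) \<bullet> (\<Delta> *v (X t /\<^sub>R real t))))
              = ereal (\<eta> \<bullet> (\<Delta> *v \<eta>))"
    and tm_mono: "mono tm" and tm_unb: "filterlim tm at_top sequentially"
    and tm_lim: "(\<lambda>m. X (tm m) /\<^sub>R real (tm m)) \<longlonglongrightarrow> \<mu>"
  shows "\<mu> \<bullet> (\<Delta> *v \<eta>) \<ge> \<eta> \<bullet> (\<Delta> *v \<eta>) \<longrightarrow> \<mu> = \<eta>"
proof
  assume ge: "\<mu> \<bullet> (\<Delta> *v \<eta>) \<ge> \<eta> \<bullet> (\<Delta> *v \<eta>)"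
  define Q where "Q t = ereal ((X t /\<^sub>R real t) \<bullet> (\<Delta> *v (X t /\<^sub>R real t)))" for t
  have Q_lim: "((\<lambda>m. Q (tm m)) \<longlongrightarrow> ereal (\<mu> \<bullet> (\<Delta> *v \<mu>))) sequentially"
    unfolding Q_def
    by (intro tendsto_ereal tendsto_inner tm_lim
          bounded_linear.tendsto[OF matrix_vector_mul_bounded_linear])
  have "ereal (\<mu> \<bullet> (\<Delta> *v \<mu>)) \<le> limsup Q"
    by (rule Limsup_ge_limit_along[OF tm_unb _ Q_lim]) simp
  then have "\<mu> \<bullet> (\<Delta> *v \<mu>) \<le> \<eta> \<bullet> (\<Delta> *v \<eta>)"
    using H unfolding Q_def by simp
  then have "(\<mu> - \<eta>) \<bullet> (\<Delta> *v (\<mu> - \<eta>)) \<le> 0"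
    using ge unfolding diagonal_quadratic_form_diff[OF diag] by simp
  then show "\<mu> = \<eta>"
    using diagonal_quadratic_form_nonpos_imp_zero[OF diag diag_pos, of "\<mu> - \<eta>"] by simp
qed

end
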